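(* Let $\mathcal{S} \subseteq M_{m,n}$ be a subspace and let $P_{\mathcal{S}} \in M_n \otimes M_m$ be the orthogonal projection onto $\mathrm{vec}(\mathcal{S}) \subseteq \mathbb{R}^n\otimes\mathbb{R}^m$. Then \[ d(\mathcal{S})^2 \le W^{1+i}_{\max}(P_{\mathcal{S}}). \] In particular, if $W^{1+i}_{\max}(P_{\mathcal{S}}) < 1$ then $\mathcal{S}$ is rank-one-avoiding, i.e. no matrix in $\mathcal{S}$ has rank exactly $1$.
   Context: $M_{m,n}$ denotes real $m\times n$ matrices, $M_n = M_{n,n}$, and $M_n\otimes M_m$ is identified with $M_{nm}$ via the Kronecker product. The vectorization $\mathrm{vec}: M_{m,n}\to\mathbb{R}^n\otimes\mathbb{R}^m = \mathbb{R}^{mn}$ stacks the columns of a matrix on top of one another (first column on top), and $\mathrm{vec}(\mathcal{S}) = \{\mathrm{vec}(Y): Y\in\mathcal{S}\}$. For a subspace $\mathcal{S}$, $d(\mathcal{S}) = \max\{\|Y\| : Y\in\mathcal{S}, \|Y\|_F \le 1\}$, where $\|Y\|$ is the operator norm (largest singular value) and $\|Y\|_F$ the Frobenius norm. For $A = \sum_j X_j \otimes Y_j \in M_n\otimes M_m$, the partial transpose is $A^\Gamma = \sum_j X_j \otimes Y_j^T$. The numerical range of $A\in M_N(\mathbb{C})$ is $W(A) = \{\mathbf{x}^*A\mathbf{x} : \mathbf{x}\in\mathbb{C}^N, \|\mathbf{x}\|=1\}$. For real $B$, $W^{1+i}(B) = \{c\in\mathbb{R} : c(1+i)\in W(B+iB^\Gamma)\}$,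 a nonempty compact interval with maximum $W^{1+i}_{\max}(B)$. *)

theory Defs
  imports "HOL-Analysis.Analysis"
begin

text \<open>Matrices in M_{m,n} are real^'n::finite^'m::finite (Y$i$j: row i::'m, column j::'n).
  R^n (x) R^m is indexed by pairs (j,i) :: 'n::finite \<times> 'm::finite, the Kronecker ordering
  e_j (x) e_i, which is exactly the column-stacking order of vec.
  M_n (x) M_m is real^('n\<times>'m)^('n\<times>'m), with (X (x) Y)$(j,i)$(l,k) = X$j$l * Y$i$k.\<close>

definition vecm :: "real^'n::finite^'m::finite \<Rightarrow> real^('n::finite \<times> 'm::finite)" where
  "vecm Y = (\<chi> p. Y $ snd p $ fst p)"

definition ptrans :: "'a^('n::finite \<times> 'm::finite)^('n::finite \<times> 'm::finite) \<Rightarrow> 'a^('n::finite \<times> 'm::finite)^('n::finite \<times> 'm::finite)" where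
  "ptrans A = (\<chi> p q. A $ (fst p, snd q) $ (fst q, snd p))"

definition is_orth_proj :: "real^'k::finite^'k \<Rightarrow> (real^'k) set \<Rightarrow> bool" where
  "is_orth_proj P V \<longleftrightarrow>
     (\<forall>v. P *v v \<in> V \<and> (\<forall>w\<in>V. (v - P *v v) \<bullet> w = 0))"

definition frob_norm :: "real^'n::finite^'m::finite \<Rightarrow> real" where
  "frob_norm Y = sqrt (\<Sum>i\<in>UNIV. \<Sum>j\<in>UNIV. (Y $ i $ j)\<^sup>2)"

definition op_norm :: "real^'n::finite^'m::finite \<Rightarrow> real" where
  "op_norm Y = onorm (\<lambda>x. Y *v x)"

definition dS :: "(real^'n::finite^'m::finite) set \<Rightarrow> real" where
  "dS S = Sup {op_norm Y | Y. Y \<in> S \<and> frob_norm Y \<le> 1}"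

definition num_range :: "complex^'k::finite^'k \<Rightarrow> complex set" where
  "num_range A = {(\<Sum>r\<in>UNIV. cnj (x $ r) * (A *v x) $ r) | x. norm x = 1}"

definition W1i :: "real^('n::finite \<times> 'm::finite)^('n::finite \<times> 'm::finite) \<Rightarrow> real set" where
  "W1i B = {c. complex_of_real c * (1 + \<i>) \<in>
              num_range (\<chi> p q. complex_of_real (B $ p $ q)
                              + \<i> * complex_of_real (ptrans B $ p $ q))}"

definition W1i_max :: "real^('n::finite \<times> 'm::finite)^('n::finite \<times> 'm::finite) \<Rightarrow> real" where
  "W1i_max B = Sup (W1i B)"

end

theory Submission imports Defs begin

text \<open>For a real product vector \<open>z = b \<otimes> a\<close> the partial transpose does not change the quadratic
  form, so \<open>z\<^sup>*(B + iB\<^sup>\<Gamma>)z = (1 + i) z\<^sup>TBz\<close> and every value \<open>z\<^sup>TBz\<close> on a unit product vector lies in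
  \<open>W\<^sup>1\<^sup>+\<^sup>i(B)\<close>. Now let \<open>Y \<in> S\<close>, \<open>\<parallel>Y\<parallel>\<^sub>F \<le> 1\<close>, \<open>u\<close> a vector and \<open>y = Yu\<close>. Since \<open>\<langle>vec Y, u \<otimes> y\<rangle> = \<parallel>y\<parallel>\<^sup>2\<close>
  and \<open>vec Y\<close> is fixed by \<open>P\<close>, Cauchy-Schwarz gives
  \<open>\<parallel>y\<parallel>\<^sup>4 \<le> \<parallel>P(u \<otimes> y)\<parallel>\<^sup>2 = (u \<otimes> y)\<^sup>TP(u \<otimes> y) \<le> \<parallel>u\<parallel>\<^sup>2\<parallel>y\<parallel>\<^sup>2 W\<^sup>1\<^sup>+\<^sup>i\<^sub>m\<^sub>a\<^sub>x(P)\<close>, i.e. \<open>\<parallel>Yu\<parallel>\<^sup>2 \<le> \<parallel>u\<parallel>\<^sup>2 W\<^sup>1\<^sup>+\<^sup>i\<^sub>m\<^sub>a\<^sub>x(P)\<close>.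
  If \<open>Y \<in> S\<close> has rank one, the normalisation of \<open>vec Y\<close> is a unit product vector fixed by \<open>P\<close>,
  which forces \<open>W\<^sup>1\<^sup>+\<^sup>i\<^sub>m\<^sub>a\<^sub>x(P) \<ge> 1\<close>.\<close>

definition kron_vec :: "real^'n::finite \<Rightarrow> real^'m::finite \<Rightarrow> real^('n \<times> 'm)" where
  "kron_vec b a = (\<chi> p. b $ fst p * a $ snd p)"

lemma sum_UNIV_prod:
  "(\<Sum>p\<in>(UNIV::('n::finite \<times> 'm::finite) set). f p) = (\<Sum>j\<in>UNIV. \<Sum>i\<in>UNIV. f (j, i))"
  using sum.cartesian_product'[of f UNIV UNIV] by simp

lemma inner_kron_vec: "kron_vec b a \<bullet> kron_vec b' a' = (b \<bullet> b') * (a \<bullet> a')"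
  unfolding inner_vec_def sum_UNIV_prod kron_vec_def sum_product
  by (intro sum.cong refl) (simp add: mult_ac)

lemma kron_vec_scaleR_left: "kron_vec (c *\<^sub>R b) a = c *\<^sub>R kron_vec b a"
  by (simp add: kron_vec_def vec_eq_iff)

lemma inner_vecm_kron_vec: "vecm Y \<bullet> kron_vec u y = y \<bullet> (Y *v u)"
  unfolding inner_vec_def sum_UNIV_prod vecm_def kron_vec_def matrix_vector_mult_def
  by (subst sum.swap) (simp add: sum_distrib_left mult_ac)

lemma frob_norm_eq_norm_vecm: "frob_norm Y = norm (vecm Y)"
  unfolding frob_norm_def norm_vec_def L2_set_def vecm_def sum_UNIV_prod
  by (subst sum.swap) simp

lemma linear_vecm: "linear vecm"
  by (auto simp: linear_iff vecm_def vec_eq_iff)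

lemma vecm_eq_0_iff: "vecm Y = 0 \<longleftrightarrow> Y = 0"
  by (auto simp: vecm_def vec_eq_iff)

lemma vecm_outer_product: "vecm (\<chi> i j. a $ i * b $ j) = kron_vec b a"
  by (simp add: vecm_def kron_vec_def vec_eq_iff mult.commute)

lemma rank_one_imp_outer_product:
  fixes Y :: "real^'n::finite^'m::finite"
  assumes "rank Y = 1"
  obtains a b where "Y = (\<chi> i j. a $ i * b $ j)"
proof -
  obtain Bs where Bs: "Bs \<subseteq> rows Y" "rows Y \<subseteq> span Bs" "card Bs = dim (rows Y)"
    by (rule basis_exists)
  then obtain b where b: "Bs = {b}"
    using assms by (auto simp: row_rank_def card_1_singleton_iff)
  have "\<exists>k. Y $ i = k *\<^sub>R b" for i
  proof -
    have "row i Y \<in> span {b}" using Bs(2) b by (auto simp: rows_def)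
    then show ?thesis by (auto simp: span_singleton row_def vec_eq_iff)
  qed
  then obtain k where "\<And>i. Y $ i = k i *\<^sub>R b" by metis
  then have "Y = (\<chi> i j. (\<chi> i. k i) $ i * b $ j)" by (simp add: vec_eq_iff)
  then show ?thesis by (rule that)
qed

lemma quadratic_form_ptrans_kron_vec:
  fixes B :: "real^('n::finite \<times> 'm::finite)^('n \<times> 'm)" and a b
  defines "z \<equiv> kron_vec b a"
  shows "z \<bullet> (ptrans B *v z) = z \<bullet> (B *v z)"
proof -
  have expand: "z \<bullet> (A *v z) = (\<Sum>(r, q)\<in>UNIV \<times> UNIV. z $ r * A $ r $ q * z $ q)"
    for A :: "real^('n \<times> 'm)^('n \<times> 'm)"
    by (simp add: inner_vec_def matrix_vector_mult_def sum_distrib_left mult.assoc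
        sum.cartesian_product[of _ UNIV UNIV, symmetric] del: UNIV_Times_UNIV)
  \<comment> \<open>exchanging the \<open>'m\<close>-components of the two indices is an involution preserving \<open>z r * z q\<close>\<close>
  have "(\<Sum>(r, q)\<in>UNIV \<times> UNIV. z $ r * ptrans B $ r $ q * z $ q)
      = (\<Sum>(r, q)\<in>UNIV \<times> UNIV. z $ r * B $ r $ q * z $ q)"
    by (rule sum.reindex_bij_witness
        [where i = "\<lambda>(r, q). ((fst r, snd q), (fst q, snd r))"
           and j = "\<lambda>(r, q). ((fst r, snd q), (fst q, snd r))"])
      (auto simp: z_def kron_vec_def ptrans_def)
  then show ?thesis by (simp only: expand)
qed

lemma complexified_quadratic_form_in_num_range:
  fixes B C :: "real^'k::finite^'k"
  assumes "norm z = 1"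
  shows "Complex (z \<bullet> (B *v z)) (z \<bullet> (C *v z))
           \<in> num_range (\<chi> p q. complex_of_real (B $ p $ q) + \<i> * complex_of_real (C $ p $ q))"
proof -
  let ?x = "(\<chi> r. complex_of_real (z $ r)) :: complex^'k"
  have "norm ?x = 1" using assms by (simp add: norm_vec_def)
  moreover have "Complex (z \<bullet> (B *v z)) (z \<bullet> (C *v z))
      = (\<Sum>r\<in>UNIV. cnj (?x $ r) *
           ((\<chi> p q. complex_of_real (B $ p $ q) + \<i> * complex_of_real (C $ p $ q)) *v ?x) $ r)"
    by (simp add: Complex_eq inner_vec_def matrix_vector_mult_def sum_distrib_left
        sum.distrib algebra_simps)
  ultimately show ?thesis unfolding num_range_def by blast
qed

lemma quadratic_form_kron_vec_in_W1i:
  assumes "norm (kron_vec b a) = 1"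
  shows "kron_vec b a \<bullet> (B *v kron_vec b a) \<in> W1i B"
  using complexified_quadratic_form_in_num_range[OF assms, of B "ptrans B"]
  by (simp add: W1i_def quadratic_form_ptrans_kron_vec Complex_eq algebra_simps)

lemma bdd_above_W1i:
  fixes B :: "real^('n::finite \<times> 'm::finite)^('n \<times> 'm)"
  shows "bdd_above (W1i B)"
proof -
  define A where "A = (\<chi> p q. complex_of_real (B $ p $ q) + \<i> * complex_of_real (ptrans B $ p $ q))"
  have "c \<le> (\<Sum>r\<in>UNIV. \<Sum>q\<in>UNIV. norm (A $ r $ q))" if "c \<in> W1i B" for c
  proof -
    obtain x :: "complex^('n \<times> 'm)" where x: "norm x = 1"
      and c: "complex_of_real c * (1 + \<i>) = (\<Sum>r\<in>UNIV. cnj (x $ r) * (A *v x) $ r)"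
      using \<open>c \<in> W1i B\<close> unfolding W1i_def num_range_def A_def by blast
    have x_le: "norm (x $ r) \<le> 1" for r
      using Finite_Cartesian_Product.norm_nth_le[of x r] x by simp
    have "c = Re (complex_of_real c * (1 + \<i>))" by simp
    also have "\<dots> \<le> (\<Sum>r\<in>UNIV. norm (cnj (x $ r) * (A *v x) $ r))"
      unfolding c using complex_Re_le_cmod norm_sum order_trans by blast
    also have "\<dots> \<le> (\<Sum>r\<in>UNIV. \<Sum>q\<in>UNIV. norm (A $ r $ q))"
    proof (rule sum_mono)
      fix r
      have "norm (cnj (x $ r) * (A *v x) $ r) \<le> norm ((A *v x) $ r)"
        using x_le by (simp add: norm_mult mult_left_le_one_le)
      also have "\<dots> \<le> (\<Sum>q\<in>UNIV. norm (A $ r $ q * x $ q))"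
        unfolding matrix_vector_mult_def by (simp add: norm_sum)
      also have "\<dots> \<le> (\<Sum>q\<in>UNIV. norm (A $ r $ q))"
        using x_le by (intro sum_mono) (simp add: norm_mult mult_right_le_one_le)
      finally show "norm (cnj (x $ r) * (A *v x) $ r) \<le> (\<Sum>q\<in>UNIV. norm (A $ r $ q))" .
    qed
    finally show ?thesis .
  qed
  then show ?thesis by (auto simp: bdd_above_def)
qed

lemma quadratic_form_kron_vec_le_W1i_max:
  "kron_vec b a \<bullet> (B *v kron_vec b a) \<le> (kron_vec b a \<bullet> kron_vec b a) * W1i_max B"
proof (cases "kron_vec b a = 0")
  case False
  define t where "t = norm (kron_vec b a)"
  define x where "x = kron_vec ((1 / t) *\<^sub>R b) a"
  have "t > 0" using False by (simp add: t_def)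
  then have x: "x = (1 / t) *\<^sub>R kron_vec b a" "norm x = 1"
    by (simp_all add: x_def t_def kron_vec_scaleR_left)
  have "x \<bullet> (B *v x) \<in> W1i B"
    using quadratic_form_kron_vec_in_W1i x(2) unfolding x_def .
  then have "x \<bullet> (B *v x) \<le> W1i_max B"
    unfolding W1i_max_def by (rule cSup_upper[OF _ bdd_above_W1i])
  moreover have "kron_vec b a = t *\<^sub>R x" using \<open>t > 0\<close> x(1) by simp
  then have "kron_vec b a \<bullet> (B *v kron_vec b a) = t\<^sup>2 * (x \<bullet> (B *v x))"
    and "kron_vec b a \<bullet> kron_vec b a = t\<^sup>2"
    using x(2) by (simp_all add: matrix_vector_mult_scaleR power2_eq_square norm_eq_1)
  ultimately show ?thesis by (simp add: mult_left_mono)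
qed simp

lemma fixed_unit_kron_vec_imp_W1i_max_ge_1:
  assumes "norm (kron_vec b a) = 1" "B *v kron_vec b a = kron_vec b a"
  shows "1 \<le> W1i_max B"
  using quadratic_form_kron_vec_le_W1i_max[of b a B] assms by (simp add: norm_eq_1)

lemma W1i_max_nonneg:
  fixes B :: "real^('n::finite \<times> 'm::finite)^('n \<times> 'm)"
  assumes "\<And>z. 0 \<le> z \<bullet> (B *v z)"
  shows "0 \<le> W1i_max B"
proof -
  let ?z = "kron_vec (1 :: real^'n) (1 :: real^'m)"
  have "?z \<bullet> ?z > 0" by (simp add: inner_kron_vec)
  moreover have "0 \<le> (?z \<bullet> ?z) * W1i_max B"
    using assms[of ?z] quadratic_form_kron_vec_le_W1i_max[of 1 1 B] by linarith
  ultimately show ?thesis by (simp only: zero_le_mult_iff) linarith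
qed

lemma orth_proj_inner_right:
  assumes "is_orth_proj P V" "w \<in> V"
  shows "w \<bullet> (P *v z) = w \<bullet> z"
proof -
  have "(z - P *v z) \<bullet> w = 0" using assms unfolding is_orth_proj_def by blast
  then have "z \<bullet> w = (P *v z) \<bullet> w" by (simp add: inner_diff_left)
  then show ?thesis using inner_commute[of w z] inner_commute[of w "P *v z"] by simp
qed

lemma orth_proj_quadratic_form:
  assumes "is_orth_proj P V"
  shows "z \<bullet> (P *v z) = (norm (P *v z))\<^sup>2"
  using assms orth_proj_inner_right[OF assms, of "P *v z" z] unfolding is_orth_proj_def
  by (simp add: inner_commute power2_norm_eq_inner)

lemma orth_proj_W1i_max_nonneg:
  assumes "is_orth_proj P V"
  shows "0 \<le> W1i_max P"
  by (rule W1i_max_nonneg) (simp add: orth_proj_quadratic_form[OF assms])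

lemma orth_proj_fixes:
  assumes "is_orth_proj P V" "subspace V" "v \<in> V"
  shows "P *v v = v"
proof -
  have "v - P *v v \<in> V" using assms subspace_diff unfolding is_orth_proj_def by blast
  then have "(v - P *v v) \<bullet> (v - P *v v) = 0" using assms(1) unfolding is_orth_proj_def by blast
  then show ?thesis by simp
qed

lemma orth_proj_norm_mult_le:
  assumes P: "is_orth_proj P (vecm ` S)" and Y: "Y \<in> S" "frob_norm Y \<le> 1"
  shows "(norm (Y *v u))\<^sup>2 \<le> W1i_max P * (norm u)\<^sup>2"
proof -
  define y where "y = Y *v u"
  define z where "z = kron_vec u y"
  have "y \<bullet> y = vecm Y \<bullet> (P *v z)"
    using orth_proj_inner_right[OF P] Y(1) by (simp add: z_def y_def inner_vecm_kron_vec)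
  also have "\<dots> \<le> norm (P *v z)"
    using Y(2) Cauchy_Schwarz_ineq2[of "vecm Y" "P *v z"]
      mult_left_le_one_le[of "norm (P *v z)" "norm (vecm Y)"]
    by (simp add: frob_norm_eq_norm_vecm)
  finally have "(y \<bullet> y)\<^sup>2 \<le> (norm (P *v z))\<^sup>2" by (simp add: power_mono)
  also have "\<dots> = z \<bullet> (P *v z)" using orth_proj_quadratic_form[OF P] by simp
  also have "\<dots> \<le> (u \<bullet> u) * (y \<bullet> y) * W1i_max P"
    unfolding z_def using quadratic_form_kron_vec_le_W1i_max by (metis inner_kron_vec)
  finally have "(y \<bullet> y) * (y \<bullet> y) \<le> (W1i_max P * (u \<bullet> u)) * (y \<bullet> y)"
    by (simp add: power2_eq_square mult_ac)
  then have "y \<bullet> y \<le> W1i_max P * (u \<bullet> u)"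
    using orth_proj_W1i_max_nonneg[OF P] by (cases "y \<bullet> y = 0") (auto simp: order_le_neq_trans)
  then show ?thesis by (simp add: y_def power2_norm_eq_inner)
qed

lemma dS_bounds:
  fixes S :: "(real^'n::finite^'m::finite) set"
  assumes "subspace S" and "\<And>Y. Y \<in> S \<Longrightarrow> frob_norm Y \<le> 1 \<Longrightarrow> op_norm Y \<le> c"
  shows "0 \<le> dS S" "dS S \<le> c"
proof -
  let ?T = "{op_norm Y | Y. Y \<in> S \<and> frob_norm Y \<le> 1}"
  have "(*v) (0 :: real^'n^'m) = (\<lambda>x. 0)" by (simp add: fun_eq_iff)
  then have "op_norm (0 :: real^'n^'m) = 0" unfolding op_norm_def by (simp add: onorm_zero)
  moreover have "frob_norm (0 :: real^'n^'m) = 0" by (simp add: frob_norm_def)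
  ultimately have "0 \<in> ?T" using subspace_0[OF assms(1)] by force
  have bound: "\<And>t. t \<in> ?T \<Longrightarrow> t \<le> c" using assms(2) by blast
  show "0 \<le> dS S" unfolding dS_def by (rule cSup_upper[OF \<open>0 \<in> ?T\<close> bdd_aboveI[OF bound]])
  show "dS S \<le> c" unfolding dS_def using \<open>0 \<in> ?T\<close> by (intro cSup_least bound) blast
qed

lemma op_norm_le:
  assumes "\<And>u. norm (Y *v u) \<le> c * norm u"
  shows "op_norm Y \<le> c"
  unfolding op_norm_def using assms by (rule onorm_le)

lemma orth_proj_op_norm_le:
  assumes P: "is_orth_proj P (vecm ` S)" and Y: "Y \<in> S" "frob_norm Y \<le> 1"
  shows "op_norm Y \<le> sqrt (W1i_max P)"
proof (rule op_norm_le, rule power2_le_imp_le)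
  fix u
  show "(norm (Y *v u))\<^sup>2 \<le> (sqrt (W1i_max P) * norm u)\<^sup>2"
    using orth_proj_norm_mult_le[OF P Y] orth_proj_W1i_max_nonneg[OF P]
    by (simp add: power_mult_distrib)
  show "0 \<le> sqrt (W1i_max P) * norm u" using orth_proj_W1i_max_nonneg[OF P] by simp
qed

lemma rank_one_imp_W1i_max_ge_1:
  assumes "subspace S" and P: "is_orth_proj P (vecm ` S)" and "Y \<in> S" "rank Y = 1"
  shows "1 \<le> W1i_max P"
proof -
  obtain a b where Y: "Y = (\<chi> i j. a $ i * b $ j)"
    using rank_one_imp_outer_product[OF \<open>rank Y = 1\<close>] .
  have "Y \<noteq> 0" using \<open>rank Y = 1\<close> by auto
  define x where "x = (1 / norm (vecm Y)) *\<^sub>R vecm Y"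
  have x: "x = kron_vec ((1 / norm (vecm Y)) *\<^sub>R b) a"
    by (simp add: x_def Y vecm_outer_product kron_vec_scaleR_left)
  have "norm x = 1" using \<open>Y \<noteq> 0\<close> by (simp add: x_def vecm_eq_0_iff)
  moreover have "subspace (vecm ` S)" by (rule linear_subspace_image[OF linear_vecm assms(1)])
  then have "P *v x = x"
    using orth_proj_fixes[OF P] \<open>Y \<in> S\<close> subspace_scale unfolding x_def by blast
  ultimately show ?thesis unfolding x by (rule fixed_unit_kron_vec_imp_W1i_max_ge_1)
qed

theorem theorem4p1:
  fixes S :: "(real^'n^'m) set" and P :: "real^('n \<times> 'm)^('n \<times> 'm)"
  assumes "subspace S"
    and "is_orth_proj P (vecm ` S)"
  shows "(dS S)\<^sup>2 \<le> W1i_max P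
         \<and> (W1i_max P < 1 \<longrightarrow> (\<forall>Y\<in>S. rank Y \<noteq> 1))"
proof
  have "0 \<le> dS S" "dS S \<le> sqrt (W1i_max P)"
    using dS_bounds[OF assms(1) orth_proj_op_norm_le[OF assms(2)]] by auto
  then show "(dS S)\<^sup>2 \<le> W1i_max P"
    using orth_proj_W1i_max_nonneg[OF assms(2)] power_mono[of "dS S" "sqrt (W1i_max P)" 2] by simp
  show "W1i_max P < 1 \<longrightarrow> (\<forall>Y\<in>S. rank Y \<noteq> 1)"
    using rank_one_imp_W1i_max_ge_1[OF assms] by fastforce
qed

end
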